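(* Let $\mathbf{k}$ be a field of characteristic $0$ and $M\ge0$. For $f\in\mathcal{P}^\Sigma_{d,n}$, $b\in\mathcal{P}^\Sigma_{d,m}$, $a\in\mathcal{P}^\Sigma_{e,n+m}$ and $g\in\mathrm{Inc}(\mathbf N)$, \[(f\cdot b)\ast_g a=(f\otimes b)\ast_g\Delta(a),\] i.e. writing $\Delta(a)=\sum a^{(1)}\otimes a^{(2)}$, one has $(f\cdot b)\ast_g a=\sum (f\ast_g a^{(1)})\cdot(b\ast_g a^{(2)})$.
   Context: $\mathcal{P}_{d,n}=(\bigwedge^d\mathbf{k}^{Md})^{\otimes n}$ ($\mathcal P_{d,0}=\mathbf k$), standard basis $v_1,\dots,v_{Md}$ of $\mathbf k^{Md}$. $\Sigma_n$ permutes tensor factors; $\mathcal P^\Sigma=\bigoplus_{d,n}\mathcal P^\Sigma_{d,n}$ with $\mathcal P^\Sigma_{d,n}$ the invariants. Shuffle: for a split $\sigma=(A,B)$ of $[n+m]$ (complementary $A=\{i_1<\dots<i_n\}$, $B=\{j_1<\dots<j_m\}$), $(u_1\otimes\cdots\otimes u_n)\cdot_\sigma(w_1\otimes\cdots\otimes w_m)=z_1\otimes\cdots\otimes z_{n+m}$, $z_{i_k}=u_k$, $z_{j_k}=w_k$; $f\cdot h=\sum_\sigma f\cdot_\sigma h$ over all such splits (same $d$ required, otherwise $0$). $\mathrm{Inc}(\mathbf N)$: strictly increasing maps $\mathbf N\to\mathbf N$; for $f\in\mathcal P_{d,n}$, $h\in\mathcal P_{e,n}$, $f\ast_g h=0$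 unless $g([Md])\subseteq[M(d+e)]$, and then with $g^c:[Me]\to[M(d+e)]$ the increasing bijection onto the complement of $g([Md])$, $(x_1\otimes\cdots\otimes x_n)\ast_g(y_1\otimes\cdots\otimes y_n)=\bigotimes_i(g(x_i)\wedge g^c(y_i))$ with $g(v_{s_1}\wedge\cdots\wedge v_{s_d})=v_{g(s_1)}\wedge\cdots\wedge v_{g(s_d)}$ (bilinear; $0$ when the numbers of tensor factors differ). Comultiplication $\Delta:\mathcal P^\Sigma\to\mathcal P^\Sigma\otimes_{\mathbf k}\mathcal P^\Sigma$: for $w_1,\dots,w_n\in\bigwedge^e\mathbf k^{Me}$ and $S=\{s_1<\dots<s_j\}\subseteq[n]$, put $s(w_S)=\sum_{\tau\in\Sigma_j}w_{s_{\tau(1)}}\otimes\cdots\otimes w_{s_{\tau(j)}}$; $\Delta$ is the linear map with $\Delta(s(w_{[n]}))=\sum_{S\subseteq[n]}s(w_S)\otimes s(w_{[n]\setminus S})$. For $f\otimes b\in\mathcal P^\Sigma\otimes\mathcal P^\Sigma$ and $a_1\otimes a_2$, $(f\otimes b)\ast_g(a_1\otimes a_2):=(f\ast_g a_1)\cdot(b\ast_g a_2)$, extended linearly (terms with mismatched bidegrees vanish). *)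

theory Defs
  imports "HOL-Combinatorics.Permutations"
begin

text \<open>Basis of the exterior power of k^(M d) in degree d: the standard wedge
  v_S = v_s1 wedge ... wedge v_sd (s1 < ... < sd) is identified with the d-subset S
  of [M d] = {1..M*d}.\<close>
definition basisSets :: "nat \<Rightarrow> nat \<Rightarrow> nat set set" where
  "basisSets M d = {S. S \<subseteq> {1..M*d} \<and> card S = d}"

text \<open>Basis of P_{d,n}: length-n lists of such subsets (pure tensors of basis wedges).\<close>
definition tlists :: "nat \<Rightarrow> nat \<Rightarrow> nat \<Rightarrow> nat set list set" where
  "tlists M d n = {xs. length xs = n \<and> set xs \<subseteq> basisSets M d}"

text \<open>An element of P_{d,n} is given by its coefficient function on that basis.\<close>
definition P :: "nat \<Rightarrow> nat \<Rightarrow> nat \<Rightarrow> (nat set list \<Rightarrow> 'k::field) set" where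
  "P M d n = {f. \<forall>xs. xs \<notin> tlists M d n \<longrightarrow> f xs = 0}"

definition PSig :: "nat \<Rightarrow> nat \<Rightarrow> nat \<Rightarrow> (nat set list \<Rightarrow> 'k::field) set" where
  "PSig M d n = {f \<in> P M d n. \<forall>\<sigma> xs. \<sigma> permutes {..<n} \<and> length xs = n
      \<longrightarrow> f (permute_list \<sigma> xs) = f xs}"

definition delta :: "nat set list \<Rightarrow> nat set list \<Rightarrow> 'k::field" where
  "delta x = (\<lambda>z. if z = x then 1 else 0)"

text \<open>Shuffle product of f (n factors) and h (m factors): coefficient of z is the
  sum over splits (A,B) of [n+m] of f(z_A) h(z_B) (0-based positions).\<close>
definition shuffle :: "nat \<Rightarrow> nat \<Rightarrow> (nat set list \<Rightarrow> 'k::field) \<Rightarrow> (nat set list \<Rightarrow> 'k)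
    \<Rightarrow> nat set list \<Rightarrow> 'k" where
  "shuffle n m f h z = (if length z = n + m then
     (\<Sum>A\<in>{A. A \<subseteq> {..<n+m} \<and> card A = n}. f (nths z A) * h (nths z ({..<n+m} - A)))
   else 0)"

text \<open>g^c : [M e] -> [M(d+e)], the increasing bijection onto the complement of g([M d]).\<close>
definition gc :: "nat \<Rightarrow> nat \<Rightarrow> nat \<Rightarrow> (nat \<Rightarrow> nat) \<Rightarrow> nat \<Rightarrow> nat" where
  "gc M d e g i = sorted_list_of_set ({1..M*(d+e)} - g ` {1..M*d}) ! (i - 1)"

text \<open>v_S wedge v_T for disjoint S, T equals (-1)^(#inversions) v_(S union T).\<close>
definition wedge_sign :: "nat set \<Rightarrow> nat set \<Rightarrow> 'k::field" where
  "wedge_sign S T = (-1) ^ card {(a, b). a \<in> S \<and> b \<in> T \<and> b < a}"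

text \<open>(x_1 (x) ... (x) x_n) *_g (y_1 (x) ... (x) y_j) on basis tensors;
  zero if g([Md]) is not inside [M(d+e)] or the numbers of factors differ.\<close>
definition starBasis :: "nat \<Rightarrow> nat \<Rightarrow> nat \<Rightarrow> (nat \<Rightarrow> nat) \<Rightarrow> nat set list \<Rightarrow> nat set list
    \<Rightarrow> nat set list \<Rightarrow> 'k::field" where
  "starBasis M d e g xs ys z =
     (if g ` {1..M*d} \<subseteq> {1..M*(d+e)} \<and> length xs = length ys
         \<and> z = map2 (\<lambda>S T. g ` S \<union> gc M d e g ` T) xs ys
      then (\<Prod>i<length xs. wedge_sign (g ` (xs ! i)) (gc M d e g ` (ys ! i)))
      else 0)"

definition star :: "nat \<Rightarrow> nat \<Rightarrow> nat \<Rightarrow> (nat \<Rightarrow> nat) \<Rightarrow> nat \<Rightarrow> nat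
    \<Rightarrow> (nat set list \<Rightarrow> 'k::field) \<Rightarrow> (nat set list \<Rightarrow> 'k) \<Rightarrow> nat set list \<Rightarrow> 'k" where
  "star M d e g n j f h z =
     (\<Sum>xs\<in>tlists M d n. \<Sum>ys\<in>tlists M e j. f xs * h ys * starBasis M d e g xs ys z)"

text \<open>Number of tau in Sigma_j with u_{tau(1)} (x) ... (x) u_{tau(j)} = x, i.e. the
  coefficient of the basis tensor x in the symmetrisation s(u).\<close>
definition symm_count :: "nat set list \<Rightarrow> nat set list \<Rightarrow> nat" where
  "symm_count u x = card {\<tau>. \<tau> permutes {..<length u} \<and> permute_list \<tau> u = x}"

text \<open>Coefficient of x (x) y in Delta(s(z)) = sum_S s(z_S) (x) s(z_{[N]-S}).\<close>
definition coprod_s :: "nat \<Rightarrow> nat set list \<Rightarrow> nat set list \<times> nat set list \<Rightarrow> 'k::field" where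
  "coprod_s N z xy = (\<Sum>S\<in>Pow {..<N}.
      of_nat (symm_count (nths z S) (fst xy) * symm_count (nths z ({..<N} - S)) (snd xy)))"

text \<open>Delta on P^Sigma_{e,N}: since (char 0) a = (1/N!) sum_z a(z) s(z) for symmetric a,
  linearity gives Delta(a) = (1/N!) sum_z a(z) Delta(s(z)).  Elements of
  P^Sigma (x) P^Sigma are coefficient functions on pairs of basis tensors.\<close>
definition coprod :: "nat \<Rightarrow> nat \<Rightarrow> nat \<Rightarrow> (nat set list \<Rightarrow> 'k::field)
    \<Rightarrow> nat set list \<times> nat set list \<Rightarrow> 'k" where
  "coprod M e N a xy = (\<Sum>z\<in>tlists M e N. a z / of_nat (fact N) * coprod_s N z xy)"

definition coprodSupp :: "nat \<Rightarrow> nat \<Rightarrow> nat \<Rightarrow> (nat set list \<times> nat set list) set" where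
  "coprodSupp M e N = (\<Union>j\<in>{..N}. tlists M e j \<times> tlists M e (N - j))"

text \<open>(f (x) b) *_g D := sum over (x,y) of D(x,y) (f *_g x) . (b *_g y),
  with f in P_{d,n}, b in P_{d,m}.\<close>
definition tstar :: "nat \<Rightarrow> nat \<Rightarrow> nat \<Rightarrow> (nat \<Rightarrow> nat) \<Rightarrow> nat \<Rightarrow> nat
    \<Rightarrow> (nat set list \<Rightarrow> 'k::field) \<Rightarrow> (nat set list \<Rightarrow> 'k) \<Rightarrow> nat
    \<Rightarrow> (nat set list \<times> nat set list \<Rightarrow> 'k) \<Rightarrow> nat set list \<Rightarrow> 'k" where
  "tstar M d e g n m f b N D z = (\<Sum>xy\<in>coprodSupp M e N. D xy *
      shuffle n m (star M d e g n (length (fst xy)) f (delta (fst xy)))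
                  (star M d e g m (length (snd xy)) b (delta (snd xy))) z)"

end

theory Submission
  imports Defs
begin

text \<open>Both sides expand as sums over the splits \<open>(A, B)\<close> of the \<open>n + m\<close> tensor positions
  coming from the shuffle product. For a fixed split the basis coefficient of \<open>\<ast>\<^sub>g\<close>
  factors over positions, so it is the product of the coefficients on the \<open>A\<close>-positions and on
  the \<open>B\<close>-positions. The coefficient of \<open>\<Delta>(a)\<close> at \<open>(y\<^sub>A, y\<^sub>B)\<close> is
  \<open>a(y)\<close>: only rearrangements of \<open>y\<close> contribute, where the symmetric \<open>a\<close> is constant,
  and their weights in the symmetrised coproduct add up to \<open>N!\<close>, the normalising factor
  (here characteristic \<open>0\<close> is used). Reindexing \<open>x \<mapsto> (x\<^sub>A, x\<^sub>B)\<close> and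
  \<open>y \<mapsto> (y\<^sub>A, y\<^sub>B)\<close> bijectively then matches the two sides split by split.\<close>

lemma nths_lessThan_Diff: "length xs = n \<Longrightarrow> nths xs ({..<n} - A) = nths xs (- A)"
  unfolding nths_def by (rule arg_cong[where f = "map fst"], rule filter_cong)
    (auto dest: set_zip_rightD)

lemma mset_nths_compl: "mset (nths xs A) + mset (nths xs (- A)) = mset xs"
proof (induction xs arbitrary: A)
  case (Cons x xs)
  have "- {j. Suc j \<in> A} = {j. Suc j \<in> - A}" by auto
  then show ?case using Cons[of "{j. Suc j \<in> A}"] by (simp add: nths_Cons)
qed simp

lemma nths_compl_eqI:
  assumes "length xs = length ys" "nths xs A = nths ys A" "nths xs (- A) = nths ys (- A)"
  shows "xs = ys"
  using assms
proof (induction xs arbitrary: ys A)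
  case (Cons x xs)
  then obtain y ys' where ys: "ys = y # ys'" by (cases ys) auto
  have compl: "{j. Suc j \<notin> A} = - {j. Suc j \<in> A}" by auto
  from Cons.prems show ?case
    using Cons.IH[of ys' "{j. Suc j \<in> A}"] by (auto simp: ys nths_Cons compl split: if_splits)
qed simp

lemma nths_zip: "length xs = length ys \<Longrightarrow> nths (zip xs ys) A = zip (nths xs A) (nths ys A)"
proof (induction xs arbitrary: ys A)
  case (Cons x xs)
  then show ?case by (cases ys) (simp_all add: nths_Cons)
qed simp

lemma prod_list_nths_compl:
  "prod_list (nths xs A) * prod_list (nths xs (- A)) = (prod_list xs :: 'a::comm_monoid_mult)"
  by (metis mset_nths_compl prod_mset.union prod_mset_prod_list)

lemma nths_compl_surj:
  assumes "length u = card {i. i < k \<and> i \<in> A}" "length v = card {i. i < k \<and> i \<notin> A}"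
  shows "\<exists>x. length x = k \<and> nths x A = u \<and> nths x (- A) = v"
  using assms
proof (induction k arbitrary: u v)
  case (Suc k)
  show ?case
  proof (cases "k \<in> A")
    case True
    have "{i. i < Suc k \<and> i \<in> A} = insert k {i. i < k \<and> i \<in> A}"
      "{i. i < Suc k \<and> i \<notin> A} = {i. i < k \<and> i \<notin> A}"
      using True by (auto simp: less_Suc_eq)
    with Suc.prems have lu: "length u = Suc (card {i. i < k \<and> i \<in> A})"
      and lv: "length v = card {i. i < k \<and> i \<notin> A}" by simp_all
    from lu obtain u' c where "u = u' @ [c]" "length u' = card {i. i < k \<and> i \<in> A}"
      by (metis length_Suc_conv_rev length_append_singleton Suc_inject)
    with Suc.IH lv obtain x where "length x = k" "nths x A = u'" "nths x (- A) = v"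
      by blast
    with True \<open>u = u' @ [c]\<close> show ?thesis
      by (intro exI[of _ "x @ [c]"]) (simp add: nths_append)
  next
    case False
    have "{i. i < Suc k \<and> i \<notin> A} = insert k {i. i < k \<and> i \<notin> A}"
      "{i. i < Suc k \<and> i \<in> A} = {i. i < k \<and> i \<in> A}"
      using False by (auto simp: less_Suc_eq)
    with Suc.prems have lv: "length v = Suc (card {i. i < k \<and> i \<notin> A})"
      and lu: "length u = card {i. i < k \<and> i \<in> A}" by simp_all
    from lv obtain v' c where "v = v' @ [c]" "length v' = card {i. i < k \<and> i \<notin> A}"
      by (metis length_Suc_conv_rev length_append_singleton Suc_inject)
    with Suc.IH lu obtain x where "length x = k" "nths x A = u" "nths x (- A) = v'"
      by blast
    with False \<open>v = v' @ [c]\<close> show ?thesis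
      by (intro exI[of _ "x @ [c]"]) (simp add: nths_append)
  qed
qed simp

lemma finite_tlists: "finite (tlists M k n)"
proof -
  have "finite (basisSets M k)"
    unfolding basisSets_def by (rule finite_subset[of _ "Pow {1..M*k}"]) auto
  then show ?thesis
    unfolding tlists_def using finite_lists_length_eq by (simp add: conj_commute)
qed

lemma bij_betw_nths_tlists:
  assumes "A \<subseteq> {..<n + m}" "card A = n"
  shows "bij_betw (\<lambda>x. (nths x A, nths x ({..<n + m} - A)))
           (tlists M k (n + m)) (tlists M k n \<times> tlists M k m)"
proof -
  have "{i. i < n + m \<and> i \<in> A} = A" "{i. i < n + m \<and> i \<notin> A} = {..<n + m} - A"
    using assms(1) by auto
  moreover have "finite A" using assms(1) finite_subset by blast
  ultimately have cardA: "card {i. i < n + m \<and> i \<in> A} = n"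
    and cardB: "card {i. i < n + m \<and> i \<notin> A} = m"
    using assms by (simp_all add: card_Diff_subset)
  show ?thesis
  proof (rule bij_betwI')
    fix x y assume "x \<in> tlists M k (n + m)" "y \<in> tlists M k (n + m)"
    then show "((nths x A, nths x ({..<n + m} - A)) = (nths y A, nths y ({..<n + m} - A))) = (x = y)"
      using nths_compl_eqI[of x y A] by (auto simp: tlists_def nths_lessThan_Diff)
  next
    fix x assume "x \<in> tlists M k (n + m)"
    then show "(nths x A, nths x ({..<n + m} - A)) \<in> tlists M k n \<times> tlists M k m"
      using cardA cardB set_nths_subset[of x]
      by (auto simp: tlists_def length_nths nths_lessThan_Diff)
  next
    fix uv assume "uv \<in> tlists M k n \<times> tlists M k m"
    moreover obtain u v where uv: "uv = (u, v)" by fastforce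
    ultimately have u: "length u = n" "set u \<subseteq> basisSets M k"
      and v: "length v = m" "set v \<subseteq> basisSets M k"
      by (auto simp: tlists_def)
    obtain x where x: "length x = n + m" "nths x A = u" "nths x (- A) = v"
      using nths_compl_surj[of u "n + m" A v] u v cardA cardB by auto
    have "set x = set u \<union> set v"
      using mset_nths_compl[of x A] x by (metis set_mset_mset set_mset_union)
    then show "\<exists>x\<in>tlists M k (n + m). uv = (nths x A, nths x ({..<n + m} - A))"
      using x u v uv by (intro bexI[of _ x]) (auto simp: tlists_def nths_lessThan_Diff)
  qed
qed

lemma sum_tlists_nths:
  assumes "A \<subseteq> {..<n + m}" "card A = n"
  shows "(\<Sum>x\<in>tlists M k (n + m). h (nths x A) (nths x ({..<n + m} - A)))
       = (\<Sum>(u, v)\<in>tlists M k n \<times> tlists M k m. h u v)"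
  using sum.reindex_bij_betw[OF bij_betw_nths_tlists[OF assms], of "case_prod h"] by simp

lemma starBasis_length:
  "starBasis M d e g xs ys z \<noteq> 0 \<Longrightarrow> length ys = length xs \<and> length z = length xs"
  by (auto simp: starBasis_def split: if_splits)

lemma starBasis_nths_compl:
  assumes "length xs = length z" "length ys = length z"
  shows "starBasis M d e g xs ys z
       = (starBasis M d e g (nths xs A) (nths ys A) (nths z A) :: 'k::field)
         * starBasis M d e g (nths xs (- A)) (nths ys (- A)) (nths z (- A))"
proof -
  define h where "h = (\<lambda>S T. g ` S \<union> gc M d e g ` T)"
  define w where "w S T = (wedge_sign (g ` S) (gc M d e g ` T) :: 'k)" for S T
  have prod_eq: "(\<Prod>i<length us. wedge_sign (g ` (us ! i)) (gc M d e g ` (vs ! i))) = prod_list (map2 w us vs)"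
    if "length us = length vs" for us vs :: "nat set list"
    using that by (simp add: w_def prod.list_conv_set_nth lessThan_atLeast0)
  have nths_map2: "nths (map2 k xs ys) B = map2 k (nths xs B) (nths ys B)" for k B
    using assms by (simp add: nths_map nths_zip)
  have "z = map2 h xs ys \<longleftrightarrow>
      nths z A = map2 h (nths xs A) (nths ys A) \<and> nths z (- A) = map2 h (nths xs (- A)) (nths ys (- A))"
  proof
    assume "z = map2 h xs ys"
    then show "nths z A = map2 h (nths xs A) (nths ys A) \<and> nths z (- A) = map2 h (nths xs (- A)) (nths ys (- A))"
      by (simp only: nths_map2)
  next
    assume "nths z A = map2 h (nths xs A) (nths ys A) \<and> nths z (- A) = map2 h (nths xs (- A)) (nths ys (- A))"
    then show "z = map2 h xs ys"
      using assms by (intro nths_compl_eqI[of z _ A]) (auto simp: nths_map2)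
  qed
  moreover have "prod_list (map2 w xs ys)
      = prod_list (map2 w (nths xs A) (nths ys A)) * prod_list (map2 w (nths xs (- A)) (nths ys (- A)))"
    by (simp flip: nths_map2 add: prod_list_nths_compl)
  moreover have "(\<Prod>i<length z. wedge_sign (g ` (xs ! i)) (gc M d e g ` (ys ! i))) = prod_list (map2 w xs ys)"
    using prod_eq[of xs ys] assms by simp
  moreover have "length (nths ys B) = length (nths xs B)" for B
    using assms by (simp add: length_nths)
  ultimately show ?thesis
    using assms unfolding starBasis_def h_def[symmetric] by (simp add: prod_eq del: nths_map)
qed

lemma star_delta:
  assumes "ys \<in> tlists M e j"
  shows "star M d e g n j f (delta ys) z = (\<Sum>xs\<in>tlists M d n. f xs * starBasis M d e g xs ys z)"
  unfolding star_def delta_def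
  by (rule sum.cong[OF refl]) (simp add: assms finite_tlists if_distrib if_distribR cong: if_cong)

lemma star_delta_eq_0:
  fixes f :: "nat set list \<Rightarrow> 'k::field"
  assumes "ys \<in> tlists M e j" "j \<noteq> n"
  shows "star M d e g n j f (delta ys) z = 0"
proof -
  have "starBasis M d e g xs ys z = (0::'k)" if "xs \<in> tlists M d n" for xs
    using assms that starBasis_length[of M d e g xs ys z] by (auto simp: tlists_def)
  then show ?thesis by (simp add: star_delta[OF assms(1)] sum.neutral)
qed

lemma permute_list_eq_iff:
  assumes "\<tau> permutes {..<length u}" "length w = length u"
  shows "permute_list \<tau> u = w \<longleftrightarrow> u = permute_list (inv \<tau>) w"
proof
  assume "permute_list \<tau> u = w"
  have "u = permute_list (\<tau> \<circ> inv \<tau>) u"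
    using permutes_inv_o(1)[OF assms(1)] by simp
  also have "\<dots> = permute_list (inv \<tau>) (permute_list \<tau> u)"
    using permutes_inv[OF assms(1)] by (rule permute_list_compose)
  finally show "u = permute_list (inv \<tau>) w"
    using \<open>permute_list \<tau> u = w\<close> by simp
next
  assume "u = permute_list (inv \<tau>) w"
  have "permute_list \<tau> (permute_list (inv \<tau>) w) = permute_list (inv \<tau> \<circ> \<tau>) w"
    using assms by (intro permute_list_compose[symmetric]) simp
  also have "\<dots> = w"
    using permutes_inv_o(2)[OF assms(1)] by simp
  finally show "permute_list \<tau> u = w"
    using \<open>u = permute_list (inv \<tau>) w\<close> by simp
qed

lemma symm_count_mset: "symm_count u x \<noteq> 0 \<Longrightarrow> mset u = mset x"
  unfolding symm_count_def by (metis (mono_tags, lifting) card.empty empty_Collect_eq mset_permute_list)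

lemma sum_symm_count:
  assumes "w \<in> tlists M k n"
  shows "(\<Sum>u\<in>tlists M k n. symm_count u w) = fact n"
proof -
  have lw: "length w = n" using assms by (simp add: tlists_def)
  let ?Sn = "{\<tau>. \<tau> permutes {..<n}}"
  have fin: "finite ?Sn" by (simp add: finite_permutations)
  have "(\<Sum>u\<in>tlists M k n. symm_count u w)
      = (\<Sum>u\<in>tlists M k n. \<Sum>\<tau>\<in>?Sn. if u = permute_list (inv \<tau>) w then 1 else 0)"
  proof (rule sum.cong[OF refl])
    fix u assume "u \<in> tlists M k n"
    then have lu: "length u = n" by (simp add: tlists_def)
    have "{\<tau>. \<tau> permutes {..<length u} \<and> permute_list \<tau> u = w} = {\<tau>\<in>?Sn. u = permute_list (inv \<tau>) w}"
      using permute_list_eq_iff[of _ u w] lu lw by auto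
    then have "symm_count u w = card {\<tau>\<in>?Sn. u = permute_list (inv \<tau>) w}"
      by (simp add: symm_count_def)
    also have "\<dots> = (\<Sum>\<tau>\<in>?Sn. if u = permute_list (inv \<tau>) w then 1 else 0)"
      using sum.inter_filter[OF fin, of "\<lambda>_. 1::nat"] by simp
    finally show "symm_count u w = \<dots>" .
  qed
  also have "\<dots> = (\<Sum>\<tau>\<in>?Sn. \<Sum>u\<in>tlists M k n. if u = permute_list (inv \<tau>) w then 1 else 0)"
    by (rule sum.swap)
  also have "\<dots> = (\<Sum>\<tau>\<in>?Sn. 1)"
  proof (rule sum.cong[OF refl])
    fix \<tau> assume "\<tau> \<in> ?Sn"
    then have "permute_list (inv \<tau>) w \<in> tlists M k n"
      using assms permutes_inv[of \<tau>] lw by (simp add: tlists_def)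
    then show "(\<Sum>u\<in>tlists M k n. if u = permute_list (inv \<tau>) w then 1 else 0) = 1"
      by (simp add: finite_tlists)
  qed
  also have "\<dots> = fact n"
    using card_permutations[of "{..<n}" n] by simp
  finally show ?thesis .
qed

lemma sum_symm_count_nths:
  assumes "u \<in> tlists M k n" "v \<in> tlists M k m" "S \<subseteq> {..<n + m}"
  shows "(\<Sum>z\<in>tlists M k (n + m). symm_count (nths z S) u * symm_count (nths z ({..<n + m} - S)) v)
       = (if card S = n then fact n * fact m else 0)"
proof (cases "card S = n")
  case True
  have "(\<Sum>z\<in>tlists M k (n + m). symm_count (nths z S) u * symm_count (nths z ({..<n + m} - S)) v)
      = (\<Sum>(x, y)\<in>tlists M k n \<times> tlists M k m. symm_count x u * symm_count y v)"
    using assms(3) True by (rule sum_tlists_nths)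
  also have "\<dots> = (\<Sum>x\<in>tlists M k n. symm_count x u) * (\<Sum>y\<in>tlists M k m. symm_count y v)"
    by (simp add: sum_product sum.cartesian_product)
  finally show ?thesis
    using True assms(1,2) by (simp add: sum_symm_count)
next
  case False
  have "symm_count (nths z S) u = 0" if "z \<in> tlists M k (n + m)" for z
  proof -
    have "{i. i < length z \<and> i \<in> S} = S" using that assms(3) by (auto simp: tlists_def)
    then have "length (nths z S) \<noteq> length u"
      using False assms(1) by (simp add: length_nths tlists_def)
    then show ?thesis
      using symm_count_mset mset_eq_length by blast
  qed
  then show ?thesis using False by simp
qed

lemma sum_coprod_s:
  assumes "u \<in> tlists M k n" "v \<in> tlists M k m"
  shows "(\<Sum>z\<in>tlists M k (n + m). coprod_s (n + m) z (u, v)) = (of_nat (fact (n + m)) :: 'k::field)"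
proof -
  let ?N = "n + m"
  have "(\<Sum>z\<in>tlists M k ?N. \<Sum>S\<in>Pow {..<?N}. symm_count (nths z S) u * symm_count (nths z ({..<?N} - S)) v)
      = (\<Sum>S\<in>Pow {..<?N}. if card S = n then fact n * fact m else 0)"
    using assms by (subst sum.swap) (simp add: sum_symm_count_nths)
  also have "\<dots> = card {S. S \<subseteq> {..<?N} \<and> card S = n} * (fact n * fact m)"
    by (simp add: sum.If_cases Pow_def Collect_conj_eq Int_commute)
  also have "\<dots> = fact ?N"
    using n_subsets[of "{..<?N}" n] binomial_fact_lemma[of n ?N] by (simp add: algebra_simps)
  finally have "(\<Sum>z\<in>tlists M k ?N. \<Sum>S\<in>Pow {..<?N}.
      symm_count (nths z S) u * symm_count (nths z ({..<?N} - S)) v) = fact ?N" .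
  moreover have "(\<Sum>z\<in>tlists M k ?N. coprod_s ?N z (u, v)) = (of_nat (\<Sum>z\<in>tlists M k ?N.
      \<Sum>S\<in>Pow {..<?N}. symm_count (nths z S) u * symm_count (nths z ({..<?N} - S)) v) :: 'k)"
    by (simp add: coprod_s_def)
  ultimately show ?thesis by simp
qed

lemma coprod_s_mset:
  assumes "coprod_s N z (u, v) \<noteq> (0::'k::field)" "length z = N"
  shows "mset z = mset u + mset v"
proof -
  obtain S where "(of_nat (symm_count (nths z S) u * symm_count (nths z ({..<N} - S)) v) :: 'k) \<noteq> 0"
    using assms(1) unfolding coprod_s_def by (auto elim: sum.not_neutral_contains_not_neutral)
  then have "symm_count (nths z S) u \<noteq> 0" "symm_count (nths z ({..<N} - S)) v \<noteq> 0"
    by (metis mult_zero_left mult_zero_right of_nat_0)+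
  then have "mset (nths z S) = mset u" "mset (nths z (- S)) = mset v"
    using symm_count_mset assms(2) by (auto simp: nths_lessThan_Diff)
  then show ?thesis
    using mset_nths_compl[of z S] by simp
qed

lemma PSig_mset_eq:
  assumes "a \<in> PSig M e N" "length y = N" "mset x = mset y"
  shows "a x = a y"
proof -
  obtain \<tau> where "\<tau> permutes {..<length y}" "permute_list \<tau> y = x"
    using mset_eq_permutation[OF assms(3)] .
  then show ?thesis using assms(1,2) by (auto simp: PSig_def)
qed

lemma coprod_append:
  fixes a :: "nat set list \<Rightarrow> 'k::field_char_0"
  assumes "a \<in> PSig M e (n + m)" "u \<in> tlists M e n" "v \<in> tlists M e m"
  shows "coprod M e (n + m) a (u, v) = a (u @ v)"
proof -
  let ?N = "n + m"
  have "a z / of_nat (fact ?N) * coprod_s ?N z (u, v) = a (u @ v) / of_nat (fact ?N) * coprod_s ?N z (u, v)"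
    if "z \<in> tlists M e ?N" for z
  proof (cases "coprod_s ?N z (u, v) = (0::'k)")
    case False
    with that have "mset z = mset (u @ v)"
      using coprod_s_mset by (auto simp: tlists_def)
    then show ?thesis
      using assms that PSig_mset_eq[of a M e ?N "u @ v" z] by (auto simp: tlists_def)
  qed simp
  then have "coprod M e ?N a (u, v) = (\<Sum>z\<in>tlists M e ?N. a (u @ v) / of_nat (fact ?N) * coprod_s ?N z (u, v))"
    unfolding coprod_def by (rule sum.cong[OF refl])
  also have "\<dots> = a (u @ v) / of_nat (fact ?N) * (\<Sum>z\<in>tlists M e ?N. coprod_s ?N z (u, v))"
    by (rule sum_distrib_left[symmetric])
  also have "\<dots> = a (u @ v) / of_nat (fact ?N) * of_nat (fact ?N)"
    by (simp only: sum_coprod_s[OF assms(2,3)])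
  finally show ?thesis by simp
qed

lemma coprod_nths:
  fixes a :: "nat set list \<Rightarrow> 'k::field_char_0"
  assumes "a \<in> PSig M e (n + m)" "A \<subseteq> {..<n + m}" "card A = n" "y \<in> tlists M e (n + m)"
  shows "coprod M e (n + m) a (nths y A, nths y ({..<n + m} - A)) = a y"
proof -
  have "(nths y A, nths y ({..<n + m} - A)) \<in> tlists M e n \<times> tlists M e m"
    using bij_betw_nths_tlists[OF assms(2,3)] assms(4) by (rule bij_betw_apply)
  moreover have "mset (nths y A @ nths y ({..<n + m} - A)) = mset y"
    using assms(4) mset_nths_compl[of y A] by (simp add: tlists_def nths_lessThan_Diff)
  ultimately show ?thesis
    using assms PSig_mset_eq[OF assms(1)] by (auto simp: coprod_append tlists_def)
qed

lemma star_shuffle_expand: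
  "star M d e g (n + m) (n + m) (shuffle n m f b) a z
   = (\<Sum>A\<in>{A. A \<subseteq> {..<n + m} \<and> card A = n}. \<Sum>x\<in>tlists M d (n + m). \<Sum>y\<in>tlists M e (n + m).
        f (nths x A) * b (nths x ({..<n + m} - A)) * a y * starBasis M d e g x y z)"
proof -
  let ?SA = "{A. A \<subseteq> {..<n + m} \<and> card A = n}"
  have "star M d e g (n + m) (n + m) (shuffle n m f b) a z
      = (\<Sum>x\<in>tlists M d (n + m). \<Sum>y\<in>tlists M e (n + m). \<Sum>A\<in>?SA.
          f (nths x A) * b (nths x ({..<n + m} - A)) * a y * starBasis M d e g x y z)"
    unfolding star_def by (intro sum.cong refl) (simp add: shuffle_def tlists_def sum_distrib_right)
  also have "\<dots> = (\<Sum>x\<in>tlists M d (n + m). \<Sum>A\<in>?SA. \<Sum>y\<in>tlists M e (n + m).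
          f (nths x A) * b (nths x ({..<n + m} - A)) * a y * starBasis M d e g x y z)"
    by (intro sum.cong refl sum.swap)
  also have "\<dots> = (\<Sum>A\<in>?SA. \<Sum>x\<in>tlists M d (n + m). \<Sum>y\<in>tlists M e (n + m).
          f (nths x A) * b (nths x ({..<n + m} - A)) * a y * starBasis M d e g x y z)"
    by (rule sum.swap)
  finally show ?thesis .
qed

lemma tstar_expand:
  assumes "length z = n + m"
  shows "tstar M d e g n m f b (n + m) D z
   = (\<Sum>A\<in>{A. A \<subseteq> {..<n + m} \<and> card A = n}. \<Sum>xy\<in>coprodSupp M e (n + m).
        D xy * (star M d e g n (length (fst xy)) f (delta (fst xy)) (nths z A)
              * star M d e g m (length (snd xy)) b (delta (snd xy)) (nths z ({..<n + m} - A))))"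
  unfolding tstar_def using assms by (simp add: shuffle_def sum_distrib_left) (rule sum.swap)

lemma sum_coprodSupp_star_delta:
  "(\<Sum>xy\<in>coprodSupp M e (n + m).
      D xy * (star M d e g n (length (fst xy)) f (delta (fst xy)) u
            * star M d e g m (length (snd xy)) b (delta (snd xy)) v))
   = (\<Sum>(p, q)\<in>tlists M e n \<times> tlists M e m.
      D (p, q) * (star M d e g n n f (delta p) u * star M d e g m m b (delta q) v))"
proof -
  have fin: "finite (coprodSupp M e (n + m))"
    unfolding coprodSupp_def by (simp add: finite_tlists)
  have sub: "tlists M e n \<times> tlists M e m \<subseteq> coprodSupp M e (n + m)"
    unfolding coprodSupp_def by (intro subsetI UN_I[of n]) auto
  have "star M d e g n (length (fst xy)) f (delta (fst xy)) u = 0"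
    if "xy \<in> coprodSupp M e (n + m) - tlists M e n \<times> tlists M e m" for xy
  proof -
    from that obtain j where "fst xy \<in> tlists M e j" "snd xy \<in> tlists M e (n + m - j)" "j \<noteq> n"
      unfolding coprodSupp_def by (auto simp: mem_Times_iff) (metis add_diff_cancel_left')
    then show ?thesis by (simp add: star_delta_eq_0 tlists_def)
  qed
  then have "(\<Sum>xy\<in>coprodSupp M e (n + m).
      D xy * (star M d e g n (length (fst xy)) f (delta (fst xy)) u
            * star M d e g m (length (snd xy)) b (delta (snd xy)) v))
    = (\<Sum>xy\<in>tlists M e n \<times> tlists M e m.
      D xy * (star M d e g n (length (fst xy)) f (delta (fst xy)) u
            * star M d e g m (length (snd xy)) b (delta (snd xy)) v))"
    by (intro sum.mono_neutral_right[OF fin sub]) auto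
  also have "\<dots> = (\<Sum>(p, q)\<in>tlists M e n \<times> tlists M e m.
      D (p, q) * (star M d e g n n f (delta p) u * star M d e g m m b (delta q) v))"
    by (rule sum.cong) (auto simp: tlists_def)
  finally show ?thesis .
qed

lemma star_shuffle_summand_eq:
  fixes a :: "nat set list \<Rightarrow> 'k::field_char_0"
  assumes a: "a \<in> PSig M e (n + m)" and A: "A \<subseteq> {..<n + m}" "card A = n" and z: "length z = n + m"
  shows "(\<Sum>x\<in>tlists M d (n + m). \<Sum>y\<in>tlists M e (n + m).
            f (nths x A) * b (nths x ({..<n + m} - A)) * a y * starBasis M d e g x y z)
       = (\<Sum>(p, q)\<in>tlists M e n \<times> tlists M e m. coprod M e (n + m) a (p, q)
            * (star M d e g n n f (delta p) (nths z A)
             * star M d e g m m b (delta q) (nths z ({..<n + m} - A))))"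
proof -
  let ?B = "{..<n + m} - A" and ?Td = "tlists M d n \<times> tlists M d m" and ?Te = "tlists M e n \<times> tlists M e m"
  define X where "X u v p q = f u * b v * coprod M e (n + m) a (p, q)
      * (starBasis M d e g u p (nths z A) * starBasis M d e g v q (nths z ?B))" for u v p q
  have "f (nths x A) * b (nths x ?B) * a y * starBasis M d e g x y z
      = X (nths x A) (nths x ?B) (nths y A) (nths y ?B)"
    if "x \<in> tlists M d (n + m)" "y \<in> tlists M e (n + m)" for x y
    using that z starBasis_nths_compl[of x z y M d e g A, where 'k = 'k] coprod_nths[OF a A that(2)]
    by (simp add: X_def tlists_def nths_lessThan_Diff mult_ac)
  then have "(\<Sum>x\<in>tlists M d (n + m). \<Sum>y\<in>tlists M e (n + m).
            f (nths x A) * b (nths x ?B) * a y * starBasis M d e g x y z)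
      = (\<Sum>x\<in>tlists M d (n + m). \<Sum>(p, q)\<in>?Te. X (nths x A) (nths x ?B) p q)"
    by (simp add: sum_tlists_nths[OF A, where h = "X _ _"])
  also have "\<dots> = (\<Sum>(u, v)\<in>?Td. \<Sum>(p, q)\<in>?Te. X u v p q)"
    by (rule sum_tlists_nths[OF A, where h = "\<lambda>u v. \<Sum>(p, q)\<in>?Te. X u v p q"])
  also have "\<dots> = (\<Sum>(p, q)\<in>?Te. \<Sum>(u, v)\<in>?Td. X u v p q)"
    unfolding case_prod_beta by (rule sum.swap)
  also have "\<dots> = (\<Sum>(p, q)\<in>?Te. coprod M e (n + m) a (p, q)
      * (star M d e g n n f (delta p) (nths z A) * star M d e g m m b (delta q) (nths z ?B)))"
  proof (intro sum.cong refl, clarify)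
    fix p q assume "p \<in> tlists M e n" "q \<in> tlists M e m"
    then have "star M d e g n n f (delta p) (nths z A) * star M d e g m m b (delta q) (nths z ?B)
        = (\<Sum>u\<in>tlists M d n. f u * starBasis M d e g u p (nths z A))
        * (\<Sum>v\<in>tlists M d m. b v * starBasis M d e g v q (nths z ?B))"
      by (simp add: star_delta)
    also have "\<dots> = (\<Sum>(u, v)\<in>?Td. f u * starBasis M d e g u p (nths z A)
        * (b v * starBasis M d e g v q (nths z ?B)))"
      by (simp add: sum_product sum.cartesian_product)
    finally show "(\<Sum>(u, v)\<in>?Td. X u v p q) = coprod M e (n + m) a (p, q)
        * (star M d e g n n f (delta p) (nths z A) * star M d e g m m b (delta q) (nths z ?B))"
      by (simp add: X_def sum_distrib_left case_prod_beta mult_ac)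
  qed
  finally show ?thesis .
qed

theorem mainTheorem15:
  fixes M d e n m :: nat and g :: "nat \<Rightarrow> nat"
    and f b a :: "nat set list \<Rightarrow> 'k::field_char_0"
  assumes "strict_mono g"
    and "f \<in> PSig M d n" and "b \<in> PSig M d m" and "a \<in> PSig M e (n + m)"
  shows "star M d e g (n + m) (n + m) (shuffle n m f b) a
         = tstar M d e g n m f b (n + m) (coprod M e (n + m) a)"
proof
  fix z
  show "star M d e g (n + m) (n + m) (shuffle n m f b) a z
      = tstar M d e g n m f b (n + m) (coprod M e (n + m) a) z"
  proof (cases "length z = n + m")
    case True
    then show ?thesis
      using assms(4)
      by (simp add: star_shuffle_expand tstar_expand sum_coprodSupp_star_delta star_shuffle_summand_eq)
  next
    case False
    then have "starBasis M d e g x y z = (0::'k)" if "x \<in> tlists M d (n + m)" for x y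
      using that starBasis_length[of M d e g x y z] by (auto simp: tlists_def)
    with False show ?thesis
      by (simp add: star_def tstar_def shuffle_def)
  qed
qed

end
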